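(* Let $S$ be a $\mathcal C$-semigroup in $\mathbb N^d$ and $\mathbf f\in\mathbb N^d$ such that $\mathrm{PF}(S)=\{\mathbf f\}$ or $\mathrm{PF}(S)=\{\mathbf f,\mathbf f/2\}$. Then $S$ is $\mathcal C$-irreducible.
   Context: For a finitely generated submonoid $T$ of $\mathbb N^d$, $\mathrm{pos}(T)$ is the rational cone of nonnegative rational combinations of its generators, $\mathcal H(T)=(\mathrm{pos}(T)\setminus T)\cap\mathbb N^d$, and $\mathrm{PF}(T)=\{\mathbf a\in\mathcal H(T):\mathbf a+(T\setminus\{0\})\subseteq T\}$. $T$ is a $\mathcal C$-semigroup if $\mathcal H(T)$ is finite. A $\mathcal C$-semigroup $S$ is $\mathcal C$-irreducible if it cannot be expressed as the intersection of two finitely generated submonoids $S_1,S_2$ of $\mathbb N^d$ with $\mathrm{pos}(S_1)=\mathrm{pos}(S_2)=\mathrm{pos}(S)$, each containing $S$ properly. *)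

theory Defs
  imports Main "HOL.Rat"
begin

text \<open>Elements of N^d are represented as functions nat => nat vanishing outside {0..<d}.\<close>

definition vecs :: "nat \<Rightarrow> (nat \<Rightarrow> nat) set" where
  "vecs d = {v. \<forall>i\<ge>d. v i = 0}"

definition zerov :: "nat \<Rightarrow> nat" where
  "zerov = (\<lambda>_. 0)"

definition addv :: "(nat \<Rightarrow> nat) \<Rightarrow> (nat \<Rightarrow> nat) \<Rightarrow> (nat \<Rightarrow> nat)" where
  "addv a b = (\<lambda>i. a i + b i)"

definition fg_monoid :: "nat \<Rightarrow> (nat \<Rightarrow> nat) set \<Rightarrow> bool" where
  "fg_monoid d T \<longleftrightarrow> (\<exists>G. finite G \<and> G \<subseteq> vecs d \<and>
      T = {(\<lambda>i. \<Sum>g\<in>G. n g * g i) | n. True})"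

text \<open>For finitely generated T this
  coincides with the cone spanned by its generators.\<close>
definition pos :: "(nat \<Rightarrow> nat) set \<Rightarrow> (nat \<Rightarrow> rat) set" where
  "pos T = {x. \<exists>F c. finite F \<and> F \<subseteq> T \<and> (\<forall>g\<in>F. c g \<ge> (0::rat)) \<and>
      x = (\<lambda>i. \<Sum>g\<in>F. c g * of_nat (g i))}"

definition holes :: "nat \<Rightarrow> (nat \<Rightarrow> nat) set \<Rightarrow> (nat \<Rightarrow> nat) set" where
  "holes d T = {x \<in> vecs d. (\<lambda>i. of_nat (x i) :: rat) \<in> pos T \<and> x \<notin> T}"

definition PF :: "nat \<Rightarrow> (nat \<Rightarrow> nat) set \<Rightarrow> (nat \<Rightarrow> nat) set" where
  "PF d T = {a \<in> holes d T. \<forall>t \<in> T - {zerov}. addv a t \<in> T}"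

definition C_semigroup :: "nat \<Rightarrow> (nat \<Rightarrow> nat) set \<Rightarrow> bool" where
  "C_semigroup d S \<longleftrightarrow> fg_monoid d S \<and> finite (holes d S)"

definition C_irreducible :: "nat \<Rightarrow> (nat \<Rightarrow> nat) set \<Rightarrow> bool" where
  "C_irreducible d S \<longleftrightarrow> C_semigroup d S \<and>
     \<not> (\<exists>S1 S2. fg_monoid d S1 \<and> fg_monoid d S2 \<and> pos S1 = pos S \<and> pos S2 = pos S \<and>
          S \<subset> S1 \<and> S \<subset> S2 \<and> S = S1 \<inter> S2)"

end

theory Submission
  imports Defs
begin

text \<open>Let \<open>T \<supset> S\<close> be finitely generated with \<open>pos T = pos S\<close>. Every element of \<open>T - S\<close> is a
  hole of \<open>S\<close>, so \<open>T - S\<close> is finite, and an element of \<open>T - S\<close> of maximal total degree is a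
  pseudo-Frobenius element of \<open>S\<close>: adding a nonzero element of \<open>S\<close> raises the degree and stays
  in \<open>T\<close>, hence lands in \<open>S\<close>. Under the hypothesis, \<open>T\<close> therefore contains \<open>f\<close> or \<open>f/2\<close>, hence
  \<open>f\<close>. So every proper over-monoid with the same cone contains the hole \<open>f\<close>, and \<open>S\<close> is not
  the intersection of two of them.\<close>

definition total_degree :: "nat \<Rightarrow> (nat \<Rightarrow> nat) \<Rightarrow> nat" where
  "total_degree d x = (\<Sum>i<d. x i)"

lemma total_degree_addv: "total_degree d (addv x y) = total_degree d x + total_degree d y"
  unfolding total_degree_def addv_def by (simp add: sum.distrib)

lemma total_degree_pos:
  assumes "t \<in> vecs d" "t \<noteq> zerov"
  shows "0 < total_degree d t"
proof -
  obtain i where "t i > 0" using assms(2) by (auto simp: zerov_def fun_eq_iff)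
  moreover have "i < d"
  proof (rule ccontr)
    assume "\<not> i < d"
    then have "t i = 0" using assms(1) by (simp add: vecs_def)
    then show False using \<open>t i > 0\<close> by simp
  qed
  ultimately show ?thesis
    unfolding total_degree_def using member_le_sum[of i "{..<d}" t] by simp
qed

lemma fg_monoid_subset_vecs: "fg_monoid d T \<Longrightarrow> T \<subseteq> vecs d"
  unfolding fg_monoid_def vecs_def by (auto simp: subset_iff vecs_def)

lemma fg_monoid_addv:
  assumes "fg_monoid d T" "x \<in> T" "y \<in> T"
  shows "addv x y \<in> T"
proof -
  obtain G where G: "T = {(\<lambda>i. \<Sum>g\<in>G. n g * g i) | n. True}"
    using assms(1) unfolding fg_monoid_def by blast
  obtain n m where "x = (\<lambda>i. \<Sum>g\<in>G. n g * g i)" "y = (\<lambda>i. \<Sum>g\<in>G. m g * g i)"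
    using assms(2,3) G by blast
  then have "addv x y = (\<lambda>i. \<Sum>g\<in>G. (n g + m g) * g i)"
    unfolding addv_def by (simp add: sum.distrib algebra_simps)
  then show ?thesis using G by auto
qed

lemma self_in_pos: "x \<in> T \<Longrightarrow> (\<lambda>i. of_nat (x i) :: rat) \<in> pos T"
  unfolding pos_def by (intro CollectI exI[of _ "{x}"] exI[of _ "\<lambda>_. 1"]) auto

lemma gaps_subset_holes:
  assumes "fg_monoid d T" "pos T = pos S"
  shows "T - S \<subseteq> holes d S"
  using assms fg_monoid_subset_vecs self_in_pos unfolding holes_def by fastforce

lemma max_degree_gap_in_PF:
  assumes "fg_monoid d T" "S \<subseteq> T" "S \<subseteq> vecs d"
    and "x \<in> holes d S" "x \<in> T - S"
    and max: "\<forall>y \<in> T - S. total_degree d y \<le> total_degree d x"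
  shows "x \<in> PF d S"
  unfolding PF_def
proof (intro CollectI conjI ballI)
  show "x \<in> holes d S" by fact
  fix t assume t: "t \<in> S - {zerov}"
  then have "total_degree d x < total_degree d (addv x t)"
    using total_degree_pos[of t d] assms(3) by (auto simp: total_degree_addv)
  moreover have "addv x t \<in> T"
    using fg_monoid_addv[OF assms(1)] assms(2,5) t by blast
  ultimately show "addv x t \<in> S" using max leD by blast
qed

lemma PF_meets_overmonoid:
  assumes "C_semigroup d S" "fg_monoid d T" "pos T = pos S" "S \<subset> T"
  shows "\<exists>x \<in> T. x \<in> PF d S"
proof -
  have gaps: "T - S \<subseteq> holes d S" using gaps_subset_holes[OF assms(2,3)] .
  then have "finite (T - S)" using assms(1) finite_subset unfolding C_semigroup_def by blast
  moreover have "T - S \<noteq> {}" using assms(4) by blast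
  ultimately have "Max (total_degree d ` (T - S)) \<in> total_degree d ` (T - S)"
    and "\<forall>y \<in> T - S. total_degree d y \<le> Max (total_degree d ` (T - S))"
    by simp_all
  then obtain x where x: "x \<in> T - S" "\<forall>y \<in> T - S. total_degree d y \<le> total_degree d x"
    by (metis imageE)
  have "S \<subseteq> vecs d" using assms(1) fg_monoid_subset_vecs unfolding C_semigroup_def by blast
  then have "x \<in> PF d S"
    using max_degree_gap_in_PF[OF assms(2) _ _ _ x] assms(4) gaps x(1) by blast
  then show ?thesis using x(1) by blast
qed

theorem proposition4p6:
  fixes d :: nat and S :: "(nat \<Rightarrow> nat) set" and f :: "nat \<Rightarrow> nat"
  assumes "C_semigroup d S"
    and "f \<in> vecs d"
    and "PF d S = {f} \<or> (\<exists>h. h \<in> vecs d \<and> (\<forall>i. 2 * h i = f i) \<and> PF d S = {f, h})"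
  shows "C_irreducible d S"
proof -
  have "f \<notin> S" using assms(3) unfolding PF_def holes_def by blast
  moreover have "f \<in> T" if T: "fg_monoid d T" "pos T = pos S" "S \<subset> T" for T
  proof -
    obtain x where x: "x \<in> T" "x \<in> PF d S" using PF_meets_overmonoid[OF assms(1) T] by blast
    show ?thesis
    proof (cases "x = f")
      case False
      then obtain h where "\<forall>i. 2 * h i = f i" "x = h" using assms(3) x(2) by blast
      then have "addv x x = f" unfolding addv_def by (simp add: fun_eq_iff flip: mult_2)
      then show ?thesis using fg_monoid_addv[OF T(1) x(1) x(1)] by simp
    qed (use x in simp)
  qed
  ultimately show ?thesis unfolding C_irreducible_def using assms(1) by blast
qed

end
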